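(* Let $0<p<1$ and let $G_n\in G(n,p)$ be independent random graphs (on $n$ vertices, each edge present independently with probability $p$). Then $(G_n)_{n\in\mathbb N}$ is almost surely FO-convergent.
   Context: For a first-order graph formula $\phi$ with free variables among $x_1,\dots,x_q$ and a finite graph $G$, $\langle\phi,G\rangle=|\{(v_1,\dots,v_q)\in V(G)^q:G\models\phi(v_1,\dots,v_q)\}|/|G|^q$. A sequence $(G_n)$ is FO-convergent if $\langle\phi,G_n\rangle$ converges for every first-order formula $\phi$. *)

theory Defs
  imports "HOL-Probability.Probability"
begin

datatype fo = FTrue | FEq nat nat | FAdj nat nat | FNeg fo | FConj fo fo | FDisj fo fo
  | FEx nat fo | FAll nat fo

fun fv :: "fo \<Rightarrow> nat set" where
  "fv FTrue = {}"
| "fv (FEq i j) = {i, j}"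
| "fv (FAdj i j) = {i, j}"
| "fv (FNeg f) = fv f"
| "fv (FConj f g) = fv f \<union> fv g"
| "fv (FDisj f g) = fv f \<union> fv g"
| "fv (FEx x f) = fv f - {x}"
| "fv (FAll x f) = fv f - {x}"

text \<open>A finite graph on vertex set {0..<n} is given by n and a set E of 2-element edges.\<close>
fun sat :: "nat \<Rightarrow> nat set set \<Rightarrow> (nat \<Rightarrow> nat) \<Rightarrow> fo \<Rightarrow> bool" where
  "sat n E v FTrue = True"
| "sat n E v (FEq i j) = (v i = v j)"
| "sat n E v (FAdj i j) = ({v i, v j} \<in> E)"
| "sat n E v (FNeg f) = (\<not> sat n E v f)"
| "sat n E v (FConj f g) = (sat n E v f \<and> sat n E v g)"
| "sat n E v (FDisj f g) = (sat n E v f \<or> sat n E v g)"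
| "sat n E v (FEx x f) = (\<exists>a<n. sat n E (v(x := a)) f)"
| "sat n E v (FAll x f) = (\<forall>a<n. sat n E (v(x := a)) f)"

definition nvars :: "fo \<Rightarrow> nat" where
  "nvars f = (if fv f = {} then 0 else Suc (Max (fv f)))"

definition stone :: "fo \<Rightarrow> nat \<Rightarrow> nat set set \<Rightarrow> real" where
  "stone f n E = real (card {v \<in> Pi\<^sub>E {..<nvars f} (\<lambda>_. {..<n}). sat n E v f})
                 / real n ^ nvars f"

definition FO_convergent :: "(nat \<Rightarrow> nat set set) \<Rightarrow> bool" where
  "FO_convergent G \<longleftrightarrow> (\<forall>f. convergent (\<lambda>n. stone f n (G n)))"

definition pairs :: "nat \<Rightarrow> nat set set" where
  "pairs n = {{i, j} | i j. i < j \<and> j < n}"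

definition gnp :: "nat \<Rightarrow> real \<Rightarrow> nat set set pmf" where
  "gnp n p = map_pmf (\<lambda>b. {e \<in> pairs n. b e}) (Pi_pmf (pairs n) False (\<lambda>_. bernoulli_pmf p))"

end

theory Submission
  imports Defs
begin

text \<open>For every \<open>k\<close>, almost surely all but finitely many \<open>G n\<close> have the
  \<open>k\<close>-extension property: any \<open>k\<close> vertices, with any prescribed subset of them as
  neighbours, are extended by a further vertex. On such graphs a back-and-forth argument shows
  that whether an injective tuple satisfies a formula of quantifier depth \<open>d\<close> depends only on
  the edges it spans, as soon as \<open>k\<close> covers its free variables plus \<open>d\<close>. Non-injective
  tuples have density \<open>O(1/n)\<close>, so the Stone pairing is eventually a fixed finite sum of
  densities of edge patterns plus a vanishing error. For \<open>G(n,p)\<close> each pattern density has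
  variance \<open>O(1/n\<^sup>2)\<close>, because only tuples sharing a potential edge are correlated.
  The failure probabilities of the extension property decay exponentially and the Chebyshev
  bounds like \<open>1/n\<^sup>2\<close>; both are summable, and the first Borel-Cantelli lemma gives almost
  sure convergence.\<close>

section \<open>Back and forth on graphs with the extension property\<close>

fun qdepth :: "fo \<Rightarrow> nat" where
  "qdepth FTrue = 0"
| "qdepth (FEq i j) = 0"
| "qdepth (FAdj i j) = 0"
| "qdepth (FNeg f) = qdepth f"
| "qdepth (FConj f g) = max (qdepth f) (qdepth g)"
| "qdepth (FDisj f g) = max (qdepth f) (qdepth g)"
| "qdepth (FEx x f) = Suc (qdepth f)"
| "qdepth (FAll x f) = Suc (qdepth f)"

lemma finite_fv: "finite (fv f)"
  by (induction f) auto

lemma fv_subset_nvars: "fv f \<subseteq> {..<nvars f}"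
  unfolding nvars_def using finite_fv[of f] by (auto simp: less_Suc_eq_le)

definition loopless :: "nat set set \<Rightarrow> bool" where
  "loopless E \<longleftrightarrow> (\<forall>a. {a} \<notin> E)"

definition extension_property :: "nat \<Rightarrow> nat \<Rightarrow> nat set set \<Rightarrow> bool" where
  "extension_property k n E \<longleftrightarrow> (\<forall>A S. A \<subseteq> {..<n} \<longrightarrow> card A \<le> k \<longrightarrow> S \<subseteq> A \<longrightarrow>
     (\<exists>z<n. z \<notin> A \<and> (\<forall>y\<in>A. {z, y} \<in> E \<longleftrightarrow> y \<in> S)))"

definition partial_iso ::
    "nat set \<Rightarrow> nat set set \<Rightarrow> (nat \<Rightarrow> nat) \<Rightarrow> nat set set \<Rightarrow> (nat \<Rightarrow> nat) \<Rightarrow> bool" where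
  "partial_iso X E v E' v' \<longleftrightarrow>
     (\<forall>x\<in>X. \<forall>y\<in>X. (v x = v y \<longleftrightarrow> v' x = v' y) \<and> ({v x, v y} \<in> E \<longleftrightarrow> {v' x, v' y} \<in> E'))"

lemma partial_iso_sym: "partial_iso X E v E' v' \<Longrightarrow> partial_iso X E' v' E v"
  unfolding partial_iso_def by blast

lemma partial_iso_subset: "partial_iso X E v E' v' \<Longrightarrow> Y \<subseteq> X \<Longrightarrow> partial_iso Y E v E' v'"
  unfolding partial_iso_def by blast

lemma partial_iso_update:
  assumes iso: "partial_iso X E v E' v'" and "loopless E" "loopless E'"
    and new: "\<And>y. y \<in> X - {x} \<Longrightarrow> (a = v y \<longleftrightarrow> a' = v' y) \<and> ({a, v y} \<in> E \<longleftrightarrow> {a', v' y} \<in> E')"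
  shows "partial_iso (insert x X) E (v(x := a)) E' (v'(x := a'))"
  unfolding partial_iso_def
proof (intro ballI)
  fix u w assume u: "u \<in> insert x X" and w: "w \<in> insert x X"
  consider "u = x" "w = x" | "u = x" "w \<noteq> x" | "u \<noteq> x" "w = x" | "u \<noteq> x" "w \<noteq> x"
    by blast
  then show "((v(x := a)) u = (v(x := a)) w \<longleftrightarrow> (v'(x := a')) u = (v'(x := a')) w) \<and>
      ({(v(x := a)) u, (v(x := a)) w} \<in> E \<longleftrightarrow> {(v'(x := a')) u, (v'(x := a')) w} \<in> E')"
  proof cases
    case 1 then show ?thesis using assms(2,3) by (simp add: loopless_def)
  next
    case 2 then show ?thesis using new[of w] w by auto
  next
    case 3 then show ?thesis using new[of u] u by (auto simp: insert_commute)
  next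
    case 4 then show ?thesis using iso u w by (simp add: partial_iso_def)
  qed
qed

text \<open>A move in \<open>E\<close> is answered in \<open>E'\<close> by the partner of an already chosen vertex, or
  else by a fresh vertex with the prescribed neighbourhood, which the extension property provides.\<close>
lemma partial_iso_extend:
  assumes iso: "partial_iso X E v E' v'" and ext: "extension_property k n' E'"
    and "finite X" "card X \<le> k" "v' ` X \<subseteq> {..<n'}" "loopless E" "loopless E'"
  shows "\<exists>a'<n'. partial_iso (insert x X) E (v(x := a)) E' (v'(x := a'))"
proof -
  let ?Y = "X - {x}"
  have isoY: "partial_iso ?Y E v E' v'" using iso by (rule partial_iso_subset) blast
  show ?thesis
  proof (cases "a \<in> v ` ?Y")
    case True
    then obtain y0 where y0: "y0 \<in> ?Y" "a = v y0" by blast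
    have "partial_iso (insert x X) E (v(x := a)) E' (v'(x := v' y0))"
      by (rule partial_iso_update[OF iso assms(6,7)])
        (use y0 iso in \<open>auto simp: partial_iso_def\<close>)
    moreover have "v' y0 < n'" using y0 assms(5) by auto
    ultimately show ?thesis by blast
  next
    case False
    define A where "A = v' ` ?Y"
    define S where "S = v' ` {y\<in>?Y. {a, v y} \<in> E}"
    have "card A \<le> k"
      unfolding A_def using card_image_le[of ?Y v'] card_mono[of X ?Y] assms(3,4) by fastforce
    moreover have "A \<subseteq> {..<n'}" "S \<subseteq> A" using assms(5) unfolding A_def S_def by auto
    ultimately obtain z where z: "z < n'" "z \<notin> A" "\<forall>y\<in>A. {z, y} \<in> E' \<longleftrightarrow> y \<in> S"
      using ext unfolding extension_property_def by blast
    have "(a = v y \<longleftrightarrow> z = v' y) \<and> ({a, v y} \<in> E \<longleftrightarrow> {z, v' y} \<in> E')" if y: "y \<in> ?Y" for y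
    proof -
      have "v' y \<in> S \<longleftrightarrow> {a, v y} \<in> E"
      proof
        assume "v' y \<in> S"
        then obtain y' where "y' \<in> ?Y" "{a, v y'} \<in> E" "v' y' = v' y" unfolding S_def by auto
        moreover from this(1,3) have "v y' = v y" using isoY y unfolding partial_iso_def by blast
        ultimately show "{a, v y} \<in> E" by simp
      qed (use y in \<open>auto simp: S_def\<close>)
      then show ?thesis using y z False unfolding A_def by auto
    qed
    then have "partial_iso (insert x X) E (v(x := a)) E' (v'(x := z))"
      by (intro partial_iso_update[OF iso assms(6,7)])
    with z(1) show ?thesis by blast
  qed
qed

lemma sat_FEx_transfer:
  assumes iso: "partial_iso X E v E' v'" and fin: "finite X" and card: "card X \<le> k"
    and ext: "extension_property k n E" "extension_property k n' E'"
    and ll: "loopless E" "loopless E'"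
    and range: "v ` X \<subseteq> {..<n}" "v' ` X \<subseteq> {..<n'}"
    and step: "\<And>a a'. a < n \<Longrightarrow> a' < n' \<Longrightarrow>
      partial_iso (insert x X) E (v(x := a)) E' (v'(x := a')) \<Longrightarrow>
      sat n E (v(x := a)) f = sat n' E' (v'(x := a')) f"
  shows "sat n E v (FEx x f) = sat n' E' v' (FEx x f)"
proof
  assume "sat n E v (FEx x f)"
  then obtain a where a: "a < n" "sat n E (v(x := a)) f" by auto
  obtain a' where "a' < n'" "partial_iso (insert x X) E (v(x := a)) E' (v'(x := a'))"
    using partial_iso_extend[OF iso ext(2) fin card range(2) ll] by blast
  with a step show "sat n' E' v' (FEx x f)" by auto
next
  assume "sat n' E' v' (FEx x f)"
  then obtain a' where a': "a' < n'" "sat n' E' (v'(x := a')) f" by auto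
  obtain a where "a < n" "partial_iso (insert x X) E' (v'(x := a')) E (v(x := a))"
    using partial_iso_extend[OF partial_iso_sym[OF iso] ext(1) fin card range(1) ll(2,1)] by blast
  with a' step show "sat n E v (FEx x f)" by (auto dest: partial_iso_sym)
qed

lemma sat_eq_if_partial_iso:
  assumes ext: "extension_property k n E" "extension_property k n' E'"
    and ll: "loopless E" "loopless E'"
  shows "partial_iso X E v E' v' \<Longrightarrow> finite X \<Longrightarrow> v ` X \<subseteq> {..<n} \<Longrightarrow> v' ` X \<subseteq> {..<n'} \<Longrightarrow>
    fv f \<subseteq> X \<Longrightarrow> card X + qdepth f \<le> k \<Longrightarrow> sat n E v f = sat n' E' v' f"
proof (induction f arbitrary: X v v')
  case (FEx x f)
  show ?case
  proof (rule sat_FEx_transfer[OF FEx.prems(1,2) _ ext ll FEx.prems(3,4)])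
    show "card X \<le> k" using FEx.prems(6) by simp
    fix a a' assume "a < n" "a' < n'" and iso: "partial_iso (insert x X) E (v(x := a)) E' (v'(x := a'))"
    then show "sat n E (v(x := a)) f = sat n' E' (v'(x := a')) f"
      using FEx.prems(2-6) by (intro FEx.IH[OF iso]) (auto simp: card_insert_if)
  qed
next
  case (FAll x f)
  have "sat n E v (FEx x (FNeg f)) = sat n' E' v' (FEx x (FNeg f))"
  proof (rule sat_FEx_transfer[OF FAll.prems(1,2) _ ext ll FAll.prems(3,4)])
    show "card X \<le> k" using FAll.prems(6) by simp
    fix a a' assume "a < n" "a' < n'" and iso: "partial_iso (insert x X) E (v(x := a)) E' (v'(x := a'))"
    then show "sat n E (v(x := a)) (FNeg f) = sat n' E' (v'(x := a')) (FNeg f)"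
      using FAll.prems(2-6) by (simp only: sat.simps, intro arg_cong[where f = Not] FAll.IH[OF iso])
        (auto simp: card_insert_if)
  qed
  then show ?case by auto
qed (auto simp: partial_iso_def)


section \<open>Edge patterns of tuples\<close>

abbreviation tuples :: "nat \<Rightarrow> nat \<Rightarrow> (nat \<Rightarrow> nat) set" where
  "tuples q n \<equiv> Pi\<^sub>E {..<q} (\<lambda>_. {..<n})"

lemma finite_tuples_Collect [simp]: "finite {v \<in> tuples q n. P v}"
  by (rule finite_subset[of _ "tuples q n"]) (auto intro: finite_PiE)

definition injective_tuples :: "nat \<Rightarrow> nat \<Rightarrow> (nat \<Rightarrow> nat) set" where
  "injective_tuples q n = {v \<in> tuples q n. inj_on v {..<q}}"

definition index_pairs :: "nat \<Rightarrow> (nat \<times> nat) set" where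
  "index_pairs q = {(i, j). i < j \<and> j < q}"

definition edge_pattern :: "nat \<Rightarrow> nat set set \<Rightarrow> (nat \<Rightarrow> nat) \<Rightarrow> nat \<times> nat \<Rightarrow> bool" where
  "edge_pattern q E v = (\<lambda>(i, j) \<in> index_pairs q. {v i, v j} \<in> E)"

definition patterns :: "nat \<Rightarrow> (nat \<times> nat \<Rightarrow> bool) set" where
  "patterns q = Pi\<^sub>E (index_pairs q) (\<lambda>_. UNIV)"

lemma finite_index_pairs: "finite (index_pairs q)"
  by (rule finite_subset[of _ "{..<q} \<times> {..<q}"]) (auto simp: index_pairs_def)

lemma finite_patterns: "finite (patterns q)"
  unfolding patterns_def by (intro finite_PiE finite_index_pairs) simp

lemma edge_pattern_in_patterns: "edge_pattern q E v \<in> patterns q"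
  unfolding edge_pattern_def patterns_def by auto

lemma edge_pattern_eq_iff:
  "c \<in> patterns q \<Longrightarrow> edge_pattern q E v = c \<longleftrightarrow> (\<forall>(i, j) \<in> index_pairs q. {v i, v j} \<in> E \<longleftrightarrow> c (i, j))"
  unfolding edge_pattern_def patterns_def by (auto simp: PiE_iff extensional_def fun_eq_iff)

lemma finite_injective_tuples: "finite (injective_tuples q n)"
  by (simp add: injective_tuples_def)

lemma partial_iso_if_edge_pattern_eq:
  assumes v: "v \<in> injective_tuples q n" and v': "v' \<in> injective_tuples q n'"
    and eq: "edge_pattern q E v = edge_pattern q E' v'" and ll: "loopless E" "loopless E'"
  shows "partial_iso {..<q} E v E' v'"
  unfolding partial_iso_def
proof (intro ballI conjI)
  fix x y assume x: "x \<in> {..<q}" and y: "y \<in> {..<q}"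
  have inj: "inj_on v {..<q}" "inj_on v' {..<q}" using v v' by (simp_all add: injective_tuples_def)
  show "v x = v y \<longleftrightarrow> v' x = v' y"
    using inj_on_eq_iff[OF inj(1) x y] inj_on_eq_iff[OF inj(2) x y] by simp
  have edge: "{v i, v j} \<in> E \<longleftrightarrow> {v' i, v' j} \<in> E'" if "i < j" "j < q" for i j
    using fun_cong[OF eq, of "(i, j)"] that by (simp add: edge_pattern_def index_pairs_def)
  consider "x = y" | "x < y" | "y < x" by linarith
  then show "{v x, v y} \<in> E \<longleftrightarrow> {v' x, v' y} \<in> E'"
  proof cases
    case 1 then show ?thesis using ll by (simp add: loopless_def)
  next
    case 2 then show ?thesis using edge y by simp
  next
    case 3 then show ?thesis using edge[of y x] x by (simp add: insert_commute)
  qed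
qed

text \<open>A pattern is realised by \<open>f\<close> if some sufficiently extensive graph satisfies \<open>f\<close> at an
  injective tuple of this pattern; by the back-and-forth lemma it then does so at all of them.\<close>
definition realises :: "fo \<Rightarrow> (nat \<times> nat \<Rightarrow> bool) \<Rightarrow> bool" where
  "realises f c \<longleftrightarrow> (\<exists>n E v. extension_property (nvars f + qdepth f) n E \<and> loopless E \<and>
     v \<in> injective_tuples (nvars f) n \<and> edge_pattern (nvars f) E v = c \<and> sat n E v f)"

lemma sat_iff_realises:
  assumes ext: "extension_property (nvars f + qdepth f) n E" and "loopless E"
    and v: "v \<in> injective_tuples (nvars f) n"
  shows "sat n E v f \<longleftrightarrow> realises f (edge_pattern (nvars f) E v)"
proof
  assume "sat n E v f"
  with assms show "realises f (edge_pattern (nvars f) E v)" unfolding realises_def by blast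
next
  assume "realises f (edge_pattern (nvars f) E v)"
  then obtain n' E' v' where ext': "extension_property (nvars f + qdepth f) n' E'"
    and "loopless E'" and v': "v' \<in> injective_tuples (nvars f) n'"
    and eq: "edge_pattern (nvars f) E' v' = edge_pattern (nvars f) E v" and "sat n' E' v' f"
    unfolding realises_def by blast
  have "sat n' E' v' f = sat n E v f"
  proof (rule sat_eq_if_partial_iso[OF ext' ext \<open>loopless E'\<close> \<open>loopless E\<close>])
    show "partial_iso {..<nvars f} E' v' E v"
      by (rule partial_iso_if_edge_pattern_eq[OF v' v eq \<open>loopless E'\<close> \<open>loopless E\<close>])
  qed (use v v' fv_subset_nvars[of f] in \<open>auto simp: injective_tuples_def\<close>)
  with \<open>sat n' E' v' f\<close> show "sat n E v f" by simp
qed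

definition pattern_density :: "(nat \<times> nat \<Rightarrow> bool) \<Rightarrow> nat \<Rightarrow> nat \<Rightarrow> nat set set \<Rightarrow> real" where
  "pattern_density c q n E =
     real (card {v \<in> injective_tuples q n. edge_pattern q E v = c}) / real n ^ q"

lemma stone_eq_pattern_sum:
  assumes "extension_property (nvars f + qdepth f) n E" "loopless E"
  shows "stone f n E =
    (\<Sum>c | c \<in> patterns (nvars f) \<and> realises f c. pattern_density c (nvars f) n E) +
    real (card {v \<in> tuples (nvars f) n - injective_tuples (nvars f) n. sat n E v f}) / real n ^ nvars f"
proof -
  let ?q = "nvars f"
  let ?C = "{c. c \<in> patterns ?q \<and> realises f c}"
  let ?Inj = "{v \<in> injective_tuples ?q n. sat n E v f}"
  let ?Rest = "{v \<in> tuples ?q n - injective_tuples ?q n. sat n E v f}"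
  have finC: "finite ?C" using finite_patterns by simp
  have split: "{v \<in> tuples ?q n. sat n E v f} = ?Inj \<union> ?Rest"
    by (auto simp: injective_tuples_def)
  have classes: "?Inj = (\<Union>c\<in>?C. {v \<in> injective_tuples ?q n. edge_pattern ?q E v = c})"
    using sat_iff_realises[OF assms] edge_pattern_in_patterns by blast
  have fin: "finite ?Inj" "finite ?Rest"
    using finite_injective_tuples by (auto intro: finite_subset[of _ "tuples ?q n"] finite_PiE)
  have "card {v \<in> tuples ?q n. sat n E v f} = card ?Inj + card ?Rest"
    unfolding split by (rule card_Un_disjoint[OF fin]) (auto simp: injective_tuples_def)
  also have "card ?Inj = (\<Sum>c\<in>?C. card {v \<in> injective_tuples ?q n. edge_pattern ?q E v = c})"
    unfolding classes
    by (rule card_UN_disjoint[OF finC]) (auto intro: finite_subset[OF _ finite_injective_tuples])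
  finally show ?thesis
    unfolding stone_def pattern_density_def by (simp add: sum_divide_distrib add_divide_distrib)
qed

lemma card_tuples_determined:
  assumes S: "S \<subseteq> tuples q n" and J: "J \<subseteq> {..<q}"
    and det: "\<And>v w. v \<in> S \<Longrightarrow> w \<in> S \<Longrightarrow> (\<forall>i\<in>{..<q} - J. v i = w i) \<Longrightarrow> v = w"
  shows "card S * n ^ card J \<le> n ^ q"
proof -
  let ?R = "{..<q} - J"
  have "inj_on (\<lambda>v. restrict v ?R) S"
  proof (rule inj_onI)
    fix v w assume "v \<in> S" "w \<in> S" and eq: "restrict v ?R = restrict w ?R"
    have "v i = w i" if "i \<in> ?R" for i using fun_cong[OF eq, of i] that by simp
    with \<open>v \<in> S\<close> \<open>w \<in> S\<close> show "v = w" by (intro det) blast+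
  qed
  moreover have "(\<lambda>v. restrict v ?R) ` S \<subseteq> Pi\<^sub>E ?R (\<lambda>_. {..<n})"
  proof (rule image_subsetI)
    fix v assume "v \<in> S"
    then show "restrict v ?R \<in> Pi\<^sub>E ?R (\<lambda>_. {..<n})"
      using S by (subst restrict_PiE_iff) (auto simp: PiE_iff)
  qed
  ultimately have "card S \<le> card (Pi\<^sub>E ?R (\<lambda>_. {..<n}))"
    by (intro card_inj_on_le) (auto intro: finite_PiE)
  also have "\<dots> = n ^ (q - card J)"
    using J by (simp add: card_PiE card_Diff_subset finite_subset)
  finally have "card S * n ^ card J \<le> n ^ (q - card J) * n ^ card J" by simp
  also have "\<dots> = n ^ q"
    using card_mono[OF _ J] by (simp flip: power_add)
  finally show ?thesis .
qed

lemma card_tuples_two_values: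
  assumes "i < q" "j < q" "i \<noteq> j"
  shows "card {v \<in> tuples q n. v i = a \<and> v j = b} * n ^ 2 \<le> n ^ q"
proof -
  have "card {v \<in> tuples q n. v i = a \<and> v j = b} * n ^ card {i, j} \<le> n ^ q"
  proof (rule card_tuples_determined)
    fix v w assume v: "v \<in> {v \<in> tuples q n. v i = a \<and> v j = b}"
      and w: "w \<in> {v \<in> tuples q n. v i = a \<and> v j = b}" and agree: "\<forall>t\<in>{..<q} - {i, j}. v t = w t"
    have "v t = w t" if "t < q" for t using agree that v w by (cases "t \<in> {i, j}") auto
    then show "v = w" using v w by (intro PiE_ext[of v "{..<q}" "\<lambda>_. {..<n}"]) auto
  qed (use assms in auto)
  then show ?thesis using assms(3) by (simp add: power2_eq_square)
qed

lemma card_non_injective_tuples: "card (tuples q n - injective_tuples q n) * n \<le> q ^ 2 * n ^ q"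
proof -
  let ?I = "{(i, j). i < q \<and> j < q \<and> i \<noteq> j}"
  let ?S = "\<lambda>(i, j). {v \<in> tuples q n. v i = v j}"
  have finI: "finite ?I" by (rule finite_subset[of _ "{..<q} \<times> {..<q}"]) auto
  have cardI: "card ?I \<le> q ^ 2"
    using card_mono[of "{..<q} \<times> {..<q}" ?I] by (auto simp: power2_eq_square card_cartesian_product)
  have cover: "tuples q n - injective_tuples q n \<subseteq> (\<Union>ij\<in>?I. ?S ij)"
    by (force simp: injective_tuples_def inj_on_def)
  have each: "card (?S ij) * n \<le> n ^ q" if ijI: "ij \<in> ?I" for ij
  proof -
    obtain i j where ij: "ij = (i, j)" "i < q" "j < q" "i \<noteq> j" using ijI by (cases ij) auto
    have "card (?S ij) * n ^ card {j} \<le> n ^ q"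
    proof (rule card_tuples_determined)
      fix v w assume v: "v \<in> ?S ij" and w: "w \<in> ?S ij" and agree: "\<forall>t\<in>{..<q} - {j}. v t = w t"
      have "v t = w t" if "t < q" for t
        using agree that v w ij by (cases "t = j") auto
      then show "v = w" using v w ij by (intro PiE_ext[of v "{..<q}" "\<lambda>_. {..<n}"]) auto
    qed (use ij in auto)
    then show ?thesis by simp
  qed
  have "card (tuples q n - injective_tuples q n) * n \<le> card (\<Union>ij\<in>?I. ?S ij) * n"
    using cover by (intro mult_right_mono card_mono finite_UN_I finI) (auto intro: finite_PiE)
  also have "\<dots> \<le> (\<Sum>ij\<in>?I. card (?S ij)) * n"
    by (intro mult_right_mono card_UN_le finI) simp
  also have "\<dots> \<le> (\<Sum>ij\<in>?I. n ^ q)"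
    unfolding sum_distrib_right by (intro sum_mono each)
  also have "\<dots> \<le> q ^ 2 * n ^ q"
    using cardI by simp
  finally show ?thesis .
qed

lemma non_injective_density_le:
  assumes "n > 0"
  shows "real (card (tuples q n - injective_tuples q n)) / real n ^ q \<le> real q ^ 2 / real n"
proof -
  have "real (card (tuples q n - injective_tuples q n)) * real n \<le> real q ^ 2 * real n ^ q"
    using card_non_injective_tuples[of q n] by (metis of_nat_le_iff of_nat_mult of_nat_power)
  then show ?thesis using assms by (simp add: field_simps)
qed

lemma non_injective_density_tendsto_0:
  "(\<lambda>n. real (card (tuples q n - injective_tuples q n)) / real n ^ q) \<longlonglongrightarrow> 0"
proof (rule tendsto_sandwich[of "\<lambda>_. 0" _ _ "\<lambda>n. real q ^ 2 / real n"])
  show "eventually (\<lambda>n. real (card (tuples q n - injective_tuples q n)) / real n ^ q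
      \<le> real q ^ 2 / real n) sequentially"
    using eventually_gt_at_top[of 0] by eventually_elim (rule non_injective_density_le)
  show "(\<lambda>n. real q ^ 2 / real n) \<longlonglongrightarrow> 0"
    using tendsto_mult_right_zero[OF lim_1_over_n, of "real q ^ 2"] by simp
qed auto

lemma injective_density_tendsto_1:
  "(\<lambda>n. real (card (injective_tuples q n)) / real n ^ q) \<longlonglongrightarrow> 1"
proof -
  have dens_eq: "real (card (injective_tuples q n)) / real n ^ q =
      1 - real (card (tuples q n - injective_tuples q n)) / real n ^ q" if "n > 0" for n
  proof -
    have sub: "injective_tuples q n \<subseteq> tuples q n" by (auto simp: injective_tuples_def)
    then have "card (injective_tuples q n) \<le> n ^ q"
      using card_mono[OF _ sub] by (simp add: finite_PiE card_PiE)
    with sub have "card (injective_tuples q n) + card (tuples q n - injective_tuples q n) = n ^ q"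
      by (simp add: card_Diff_subset finite_injective_tuples card_PiE)
    then have "real (card (injective_tuples q n)) + real (card (tuples q n - injective_tuples q n))
        = real n ^ q" by (metis of_nat_add of_nat_power)
    then show ?thesis using that by (simp add: field_simps)
  qed
  have "eventually (\<lambda>n. 1 - real (card (tuples q n - injective_tuples q n)) / real n ^ q =
      real (card (injective_tuples q n)) / real n ^ q) sequentially"
    by (rule eventually_mono[OF eventually_gt_at_top[of 0]]) (simp add: dens_eq)
  moreover have "(\<lambda>n. 1 - real (card (tuples q n - injective_tuples q n)) / real n ^ q) \<longlonglongrightarrow> 1 - 0"
    by (intro tendsto_diff tendsto_const non_injective_density_tendsto_0)
  ultimately show ?thesis by (simp add: tendsto_cong)
qed

lemma FO_convergent_if_pattern_densities_converge:
  assumes "\<And>n. loopless (E n)"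
    and "\<And>k. eventually (\<lambda>n. extension_property k n (E n)) sequentially"
    and "\<And>q c. c \<in> patterns q \<Longrightarrow> convergent (\<lambda>n. pattern_density c q n (E n))"
  shows "FO_convergent E"
  unfolding FO_convergent_def
proof
  fix f
  let ?q = "nvars f"
  let ?main = "\<lambda>n. \<Sum>c | c \<in> patterns ?q \<and> realises f c. pattern_density c ?q n (E n)"
  let ?rest = "\<lambda>n. real (card {v \<in> tuples ?q n - injective_tuples ?q n. sat n (E n) v f}) / real n ^ ?q"
  have "convergent ?main" by (intro convergent_sum) (use assms(3) in auto)
  then obtain L where "?main \<longlonglongrightarrow> L" by (auto simp: convergent_def)
  moreover have "?rest \<longlonglongrightarrow> 0"
  proof (rule tendsto_sandwich[OF _ _ tendsto_const non_injective_density_tendsto_0])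
    show "eventually (\<lambda>n. ?rest n \<le> real (card (tuples ?q n - injective_tuples ?q n)) / real n ^ ?q)
      sequentially"
      by (intro always_eventually allI divide_right_mono of_nat_mono card_mono) (auto intro: finite_PiE)
  qed auto
  ultimately have "(\<lambda>n. ?main n + ?rest n) \<longlonglongrightarrow> L + 0" by (rule tendsto_add)
  moreover have "eventually (\<lambda>n. ?main n + ?rest n = stone f n (E n)) sequentially"
    using assms(2)[of "nvars f + qdepth f"]
    by eventually_elim (simp add: stone_eq_pattern_sum assms(1))
  ultimately show "convergent (\<lambda>n. stone f n (E n))"
    unfolding convergent_def by (auto simp: tendsto_cong)
qed


section \<open>Product distributions, second moments and Borel-Cantelli\<close>

lemma measure_pair_pmf_Times:
  "measure_pmf.prob (pair_pmf M N) (A \<times> B) = measure_pmf.prob M A * measure_pmf.prob N B"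
proof -
  have "measure_pmf.prob (pair_pmf M N) (A \<times> B) =
      measure_pmf.prob (pair_pmf M N) ((A \<inter> set_pmf M) \<times> (B \<inter> set_pmf N))"
    by (subst measure_Int_set_pmf[symmetric]) (auto simp: set_pair_pmf intro: arg_cong2[where f = measure])
  also have "\<dots> = measure_pmf.prob M (A \<inter> set_pmf M) * measure_pmf.prob N (B \<inter> set_pmf N)"
    by (rule measure_pmf_prob_product) (auto intro: countable_subset[OF _ countable_set_pmf])
  finally show ?thesis by (simp add: measure_Int_set_pmf)
qed

lemma measure_Pi_pmf_local:
  assumes "finite I" "J \<subseteq> I" and local: "\<And>b b'. (\<And>e. e \<in> J \<Longrightarrow> b e = b' e) \<Longrightarrow> Q b = Q b'"
  shows "measure_pmf.prob (Pi_pmf I d P) {b. Q b} = measure_pmf.prob (Pi_pmf J d P) {b. Q b}"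
proof -
  have "(\<lambda>b x. if x \<in> J then b x else d) -` {b. Q b} = {b. Q b}"
    using local[of "\<lambda>x. if x \<in> J then _ x else d"] by auto
  then show ?thesis by (simp add: Pi_pmf_subset[OF assms(1,2)])
qed

lemma measure_Pi_pmf_Int_disjoint:
  assumes "finite I" "A \<subseteq> I" "B \<subseteq> I" "A \<inter> B = {}"
    and Q: "\<And>b b'. (\<And>e. e \<in> A \<Longrightarrow> b e = b' e) \<Longrightarrow> Q b = Q b'"
    and R: "\<And>b b'. (\<And>e. e \<in> B \<Longrightarrow> b e = b' e) \<Longrightarrow> R b = R b'"
  shows "measure_pmf.prob (Pi_pmf I d P) {b. Q b \<and> R b} =
    measure_pmf.prob (Pi_pmf I d P) {b. Q b} * measure_pmf.prob (Pi_pmf I d P) {b. R b}"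
proof -
  have fin: "finite A" "finite B" using assms(1-3) by (auto intro: finite_subset)
  let ?glue = "\<lambda>(f, g) x. if x \<in> A then f x else g x"
  have "?glue -` {b. Q b \<and> R b} = {b. Q b} \<times> {b. R b}"
  proof -
    have "Q (?glue (f, g)) = Q f" "R (?glue (f, g)) = R g" for f g
      using assms(4) by (auto intro!: Q R)
    then show ?thesis by auto
  qed
  then have "measure_pmf.prob (Pi_pmf (A \<union> B) d P) {b. Q b \<and> R b} =
      measure_pmf.prob (Pi_pmf A d P) {b. Q b} * measure_pmf.prob (Pi_pmf B d P) {b. R b}"
    unfolding Pi_pmf_union[OF fin assms(4)] measure_map_pmf by (simp only: measure_pair_pmf_Times)
  moreover have "measure_pmf.prob (Pi_pmf I d P) {b. Q b \<and> R b} =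
      measure_pmf.prob (Pi_pmf (A \<union> B) d P) {b. Q b \<and> R b}"
  proof (rule measure_Pi_pmf_local)
    show "Q b \<and> R b \<longleftrightarrow> Q b' \<and> R b'" if "\<And>e. e \<in> A \<union> B \<Longrightarrow> b e = b' e" for b b'
      using Q[of b b'] R[of b b'] that by blast
  qed (use assms(1-3) in auto)
  ultimately show ?thesis
    by (simp only: measure_Pi_pmf_local[OF assms(1,2) Q] measure_Pi_pmf_local[OF assms(1,3) R])
qed

lemma measure_Pi_pmf_disjoint_blocks:
  assumes "finite Z" "finite I" "\<And>z. z \<in> Z \<Longrightarrow> K z \<subseteq> I" "disjoint_family_on K Z"
    and local: "\<And>z b b'. z \<in> Z \<Longrightarrow> (\<And>e. e \<in> K z \<Longrightarrow> b e = b' e) \<Longrightarrow> Q z b = Q z b'"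
  shows "measure_pmf.prob (Pi_pmf I d P) {b. \<forall>z\<in>Z. Q z b} =
    (\<Prod>z\<in>Z. measure_pmf.prob (Pi_pmf I d P) {b. Q z b})"
  using assms
proof (induction Z rule: finite_induct)
  case (insert z Z)
  have "measure_pmf.prob (Pi_pmf I d P) {b. Q z b \<and> (\<forall>z'\<in>Z. Q z' b)} =
      measure_pmf.prob (Pi_pmf I d P) {b. Q z b} * measure_pmf.prob (Pi_pmf I d P) {b. \<forall>z'\<in>Z. Q z' b}"
  proof (rule measure_Pi_pmf_Int_disjoint[where A = "K z" and B = "\<Union>z'\<in>Z. K z'"])
    show "K z \<inter> (\<Union>z'\<in>Z. K z') = {}"
      using insert.prems(3) insert.hyps(2) unfolding disjoint_family_on_def by fastforce
    show "Q z b = Q z b'" if "\<And>e. e \<in> K z \<Longrightarrow> b e = b' e" for b b'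
      using that by (intro insert.prems(4)) auto
    show "(\<forall>z'\<in>Z. Q z' b) = (\<forall>z'\<in>Z. Q z' b')" if "\<And>e. e \<in> (\<Union>z'\<in>Z. K z') \<Longrightarrow> b e = b' e" for b b'
      using that by (intro ball_cong[OF refl] insert.prems(4)) auto
  qed (use insert.prems(1,2) in auto)
  moreover have "measure_pmf.prob (Pi_pmf I d P) {b. \<forall>z'\<in>Z. Q z' b} =
      (\<Prod>z'\<in>Z. measure_pmf.prob (Pi_pmf I d P) {b. Q z' b})"
  proof (rule insert.IH)
    show "K z' \<subseteq> I" if "z' \<in> Z" for z' using insert.prems(2) that by blast
    show "disjoint_family_on K Z"
      using insert.prems(3) by (rule disjoint_family_on_mono[rotated]) blast
    show "Q z' b = Q z' b'" if "z' \<in> Z" "\<And>e. e \<in> K z' \<Longrightarrow> b e = b' e" for z' b b'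
      using that by (intro insert.prems(4)) auto
  qed (fact insert.prems(1))
  ultimately show ?case
    using insert.hyps by simp
qed simp

lemma measure_Pi_pmf_coordinates:
  assumes "finite Z" "finite I" "inj_on e Z" "e ` Z \<subseteq> I"
  shows "measure_pmf.prob (Pi_pmf I d P) {b. \<forall>z\<in>Z. b (e z) = x z} =
    (\<Prod>z\<in>Z. measure_pmf.prob (P (e z)) {x z})"
proof -
  have "measure_pmf.prob (Pi_pmf I d P) {b. \<forall>z\<in>Z. b (e z) = x z} =
      (\<Prod>z\<in>Z. measure_pmf.prob (Pi_pmf I d P) {b. b (e z) = x z})"
  proof (rule measure_Pi_pmf_disjoint_blocks[where K = "\<lambda>z. {e z}"])
    show "disjoint_family_on (\<lambda>z. {e z}) Z"
      using assms(3) unfolding disjoint_family_on_def by (auto dest: inj_onD)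
  qed (use assms(1,2,4) in auto)
  also have "\<dots> = (\<Prod>z\<in>Z. measure_pmf.prob (P (e z)) {x z})"
  proof (rule prod.cong[OF refl])
    fix z assume "z \<in> Z"
    then have "e z \<in> I" using assms(4) by blast
    then have "map_pmf (\<lambda>b. b (e z)) (Pi_pmf I d P) = P (e z)"
      using assms(2) by (simp add: Pi_pmf_component)
    then have "measure_pmf.prob (P (e z)) {x z} =
        measure_pmf.prob (Pi_pmf I d P) ((\<lambda>b. b (e z)) -` {x z})"
      by (metis measure_map_pmf)
    then show "measure_pmf.prob (Pi_pmf I d P) {b. b (e z) = x z} = measure_pmf.prob (P (e z)) {x z}"
      by (simp add: vimage_def)
  qed
  finally show ?thesis .
qed

lemma variance_indicator_sum_le:
  fixes M :: "'a pmf" and R :: "'v \<Rightarrow> 'a set"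
  assumes finM: "finite (set_pmf M)" and finV: "finite V" and Ov: "Ov \<subseteq> V \<times> V"
    and indep: "\<And>v w. v \<in> V \<Longrightarrow> w \<in> V \<Longrightarrow> (v, w) \<notin> Ov \<Longrightarrow>
      measure_pmf.prob M (R v \<inter> R w) = measure_pmf.prob M (R v) * measure_pmf.prob M (R w)"
  shows "measure_pmf.variance M (\<lambda>x. \<Sum>v\<in>V. indicator (R v) x) \<le> real (card Ov)"
proof -
  let ?X = "\<lambda>x. \<Sum>v\<in>V. (indicator (R v) x :: real)"
  let ?P = "measure_pmf.prob M"
  have int: "integrable M f" for f :: "'a \<Rightarrow> real"
    by (rule integrable_measure_pmf_finite[OF finM])
  have EX: "measure_pmf.expectation M ?X = (\<Sum>v\<in>V. ?P (R v))"
    by (subst Bochner_Integration.integral_sum) (auto intro: int)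
  have "measure_pmf.expectation M (\<lambda>x. (?X x)\<^sup>2) =
      measure_pmf.expectation M (\<lambda>x. \<Sum>v\<in>V. \<Sum>w\<in>V. indicator (R v \<inter> R w) x)"
    by (simp add: power2_eq_square sum_product indicator_inter_arith)
  also have "\<dots> = (\<Sum>v\<in>V. \<Sum>w\<in>V. ?P (R v \<inter> R w))"
    by (simp add: Bochner_Integration.integral_sum int)
  finally have EX2: "measure_pmf.expectation M (\<lambda>x. (?X x)\<^sup>2) = (\<Sum>v\<in>V. \<Sum>w\<in>V. ?P (R v \<inter> R w))" .
  have "measure_pmf.variance M ?X =
      measure_pmf.expectation M (\<lambda>x. (?X x)\<^sup>2) - (measure_pmf.expectation M ?X)\<^sup>2"
    by (rule measure_pmf.variance_eq) (auto intro: int)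
  also have "\<dots> = (\<Sum>v\<in>V. \<Sum>w\<in>V. ?P (R v \<inter> R w) - ?P (R v) * ?P (R w))"
    unfolding EX EX2 by (simp add: power2_eq_square sum_product sum_subtractf)
  also have "\<dots> \<le> (\<Sum>v\<in>V. \<Sum>w\<in>V. of_bool ((v, w) \<in> Ov))"
  proof (intro sum_mono)
    fix v w assume "v \<in> V" "w \<in> V"
    have "?P (R v \<inter> R w) - ?P (R v) * ?P (R w) \<le> 1"
      using measure_pmf.prob_le_1[of M "R v \<inter> R w"]
        mult_nonneg_nonneg[OF measure_nonneg measure_nonneg, of M "R v" M "R w"] by linarith
    then show "?P (R v \<inter> R w) - ?P (R v) * ?P (R w) \<le> of_bool ((v, w) \<in> Ov)"
      using indep[OF \<open>v \<in> V\<close> \<open>w \<in> V\<close>] by auto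
  qed
  also have "\<dots> = (\<Sum>x\<in>V \<times> V. of_bool (x \<in> Ov))"
    by (simp add: sum.cartesian_product case_prod_beta)
  also have "\<dots> = real (card Ov)"
    using Ov finV by (simp add: Int_absorb1 Collect_mem_eq)
  finally show ?thesis .
qed

lemma summable_power_mult_geometric:
  assumes "0 \<le> r" "r < 1"
  shows "summable (\<lambda>n. real n ^ k * r ^ n)"
proof (rule root_test_convergence)
  have "(\<lambda>n. root n (real n) ^ k * r) \<longlonglongrightarrow> 1 ^ k * r"
    by (intro tendsto_intros LIMSEQ_root)
  moreover have "eventually (\<lambda>n. root n (real n) ^ k * r = root n (norm (real n ^ k * r ^ n))) sequentially"
    using eventually_gt_at_top[of 0]
    by eventually_elim (use assms in \<open>simp add: real_root_mult real_root_power real_root_pow_pos2\<close>)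
  ultimately show "(\<lambda>n. root n (norm (real n ^ k * r ^ n))) \<longlonglongrightarrow> r"
    by (simp add: tendsto_cong)
qed (fact assms(2))

lemma AE_eventually_if_summable:
  assumes "prob_space M" and meas: "\<And>n. X n \<in> measurable M (count_space UNIV)"
    and distr: "\<And>n. distr M (count_space UNIV) (X n) = measure_pmf (D n)"
    and summable: "summable (\<lambda>n. measure_pmf.prob (D n) {x. \<not> P n x})"
  shows "AE \<omega> in M. eventually (\<lambda>n. P n (X n \<omega>)) sequentially"
proof -
  interpret prob_space M by fact
  let ?A = "\<lambda>n. X n -` {x. \<not> P n x} \<inter> space M"
  have sets: "?A n \<in> sets M" for n by (rule measurable_sets[OF meas]) simp
  have "measure M (?A n) = measure_pmf.prob (D n) {x. \<not> P n x}" for n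
    using measure_distr[OF meas[of n], of "{x. \<not> P n x}"] distr[of n] by (simp add: vimage_def)
  then have "AE \<omega> in M. eventually (\<lambda>n. \<omega> \<in> space M - ?A n) sequentially"
    using summable by (intro borel_cantelli_AE1 sets) (auto simp: emeasure_eq_measure)
  then show ?thesis by (auto elim: eventually_mono)
qed

lemma AE_tendsto_0_if_AE_eventually_small:
  fixes X :: "nat \<Rightarrow> 'a \<Rightarrow> real"
  assumes "\<And>\<epsilon>. 0 < \<epsilon> \<Longrightarrow> AE \<omega> in M. eventually (\<lambda>n. \<bar>X n \<omega>\<bar> < \<epsilon>) sequentially"
  shows "AE \<omega> in M. (\<lambda>n. X n \<omega>) \<longlonglongrightarrow> 0"
proof -
  have "AE \<omega> in M. \<forall>m. eventually (\<lambda>n. \<bar>X n \<omega>\<bar> < inverse (Suc m)) sequentially"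
    unfolding AE_all_countable by (intro allI assms) simp
  then show ?thesis
  proof eventually_elim
    case (elim \<omega>)
    show ?case
    proof (rule tendstoI)
      fix e :: real assume "0 < e"
      then obtain m where m: "inverse (Suc m) < e" using reals_Archimedean by blast
      from elim have "eventually (\<lambda>n. \<bar>X n \<omega>\<bar> < inverse (Suc m)) sequentially" by blast
      then show "eventually (\<lambda>n. dist (X n \<omega>) 0 < e) sequentially"
        by eventually_elim (use m in simp)
    qed
  qed
qed


section \<open>The random graph \<open>G(n,p)\<close>\<close>

definition edge_coins :: "nat \<Rightarrow> real \<Rightarrow> (nat set \<Rightarrow> bool) pmf" where
  "edge_coins n p = Pi_pmf (pairs n) False (\<lambda>_. bernoulli_pmf p)"

definition graph_of :: "nat \<Rightarrow> (nat set \<Rightarrow> bool) \<Rightarrow> nat set set" where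
  "graph_of n b = {e \<in> pairs n. b e}"

lemma measure_gnp:
  "measure_pmf.prob (gnp n p) {E. P E} = measure_pmf.prob (edge_coins n p) {b. P (graph_of n b)}"
  by (simp add: gnp_def edge_coins_def graph_of_def vimage_def)

lemma doubleton_in_pairs_iff: "{x, y} \<in> pairs n \<longleftrightarrow> x \<noteq> y \<and> x < n \<and> y < n"
proof
  assume "{x, y} \<in> pairs n"
  then obtain i j where "{x, y} = {i, j}" "i < j" "j < n" unfolding pairs_def by blast
  then show "x \<noteq> y \<and> x < n \<and> y < n" by (auto simp: doubleton_eq_iff)
next
  assume xy: "x \<noteq> y \<and> x < n \<and> y < n"
  show "{x, y} \<in> pairs n"
  proof (cases "x < y")
    case True then show ?thesis using xy unfolding pairs_def by blast
  next
    case False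
    then have "y < x" "{x, y} = {y, x}" using xy by auto
    then show ?thesis using xy unfolding pairs_def by blast
  qed
qed

lemma finite_pairs: "finite (pairs n)"
  by (rule finite_subset[of _ "Pow {..<n}"]) (auto simp: pairs_def)

lemma finite_set_edge_coins: "finite (set_pmf (edge_coins n p))"
  unfolding edge_coins_def by (auto simp: set_Pi_pmf finite_pairs intro!: finite_PiE_dflt)

lemma graph_of_iff: "{x, y} \<in> pairs n \<Longrightarrow> {x, y} \<in> graph_of n b \<longleftrightarrow> b {x, y}"
  by (simp add: graph_of_def)

lemma measure_edge_coins_values:
  assumes "0 \<le> p" "p \<le> 1" "finite Z" "inj_on e Z" "e ` Z \<subseteq> pairs n"
  shows "measure_pmf.prob (edge_coins n p) {b. \<forall>z\<in>Z. b (e z) = x z} =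
    (\<Prod>z\<in>Z. if x z then p else 1 - p)"
proof -
  have "pmf (bernoulli_pmf p) b = (if b then p else 1 - p)" for b
    using assms(1,2) by (cases b) simp_all
  then show ?thesis
    using assms unfolding edge_coins_def
    by (simp add: measure_Pi_pmf_coordinates finite_pairs measure_pmf_single)
qed

lemma measure_extension_witness_ge:
  assumes p: "0 < p" "p < 1" and A: "A \<subseteq> {..<n}" and z: "z < n" "z \<notin> A"
  shows "min p (1 - p) ^ card A \<le> measure_pmf.prob (edge_coins n p) {b. \<forall>y\<in>A. b {z, y} = (y \<in> S)}"
proof -
  have "finite A" using A finite_subset by blast
  have "min p (1 - p) ^ card A \<le> (\<Prod>y\<in>A. if y \<in> S then p else 1 - p)"
    using p by (subst prod_constant[symmetric], intro prod_mono) auto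
  also have "\<dots> = measure_pmf.prob (edge_coins n p) {b. \<forall>y\<in>A. b {z, y} = (y \<in> S)}"
    using p z A \<open>finite A\<close>
    by (intro measure_edge_coins_values[symmetric] inj_onI) (auto simp: doubleton_eq_iff doubleton_in_pairs_iff)
  finally show ?thesis .
qed

lemma measure_no_extension_witness:
  assumes p: "0 < p" "p < 1" and A: "A \<subseteq> {..<n}" "card A \<le> k"
  shows "measure_pmf.prob (edge_coins n p) {b. \<forall>z\<in>{..<n} - A. \<not> (\<forall>y\<in>A. b {z, y} = (y \<in> S))}
    \<le> (1 - min p (1 - p) ^ k) ^ (n - k)"
proof -
  let ?c = "min p (1 - p)"
  let ?W = "\<lambda>z b. \<forall>y\<in>A. b {z, y} = (y \<in> S)"
  let ?Z = "{..<n} - A"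
  let ?P = "measure_pmf.prob (edge_coins n p)"
  have c: "0 < ?c" "?c \<le> 1" using p by auto
  have "?P {b. \<forall>z\<in>?Z. \<not> ?W z b} = (\<Prod>z\<in>?Z. ?P {b. \<not> ?W z b})"
    unfolding edge_coins_def
  proof (rule measure_Pi_pmf_disjoint_blocks[where K = "\<lambda>z. (\<lambda>y. {z, y}) ` A"])
    show "disjoint_family_on (\<lambda>z. (\<lambda>y. {z, y}) ` A) ?Z"
      unfolding disjoint_family_on_def by (auto simp: doubleton_eq_iff)
  qed (use A(1) finite_pairs in \<open>auto simp: doubleton_in_pairs_iff\<close>)
  also have "\<dots> \<le> (\<Prod>z\<in>?Z. 1 - ?c ^ k)"
  proof (rule prod_mono)
    fix z assume z: "z \<in> ?Z"
    have "?c ^ k \<le> ?c ^ card A" using c A(2) by (intro power_decreasing) auto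
    also have "\<dots> \<le> ?P {b. ?W z b}" using z by (intro measure_extension_witness_ge p A(1)) auto
    finally have "?c ^ k \<le> ?P {b. ?W z b}" .
    moreover have "?P {b. \<not> ?W z b} = 1 - ?P {b. ?W z b}"
      using measure_pmf.prob_compl[of "{b. ?W z b}" "edge_coins n p"] by (simp add: set_diff_eq)
    ultimately show "0 \<le> ?P {b. \<not> ?W z b} \<and> ?P {b. \<not> ?W z b} \<le> 1 - ?c ^ k" by simp
  qed
  also have "\<dots> = (1 - ?c ^ k) ^ card ?Z" by simp
  also have "\<dots> \<le> (1 - ?c ^ k) ^ (n - k)"
  proof (rule power_decreasing)
    show "n - k \<le> card ?Z" using A finite_subset[OF A(1)] by (simp add: card_Diff_subset)
  qed (use c in \<open>auto simp: power_le_one\<close>)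
  finally show ?thesis .
qed

lemma card_small_subsets_le:
  assumes "0 < n"
  shows "card {A. A \<subseteq> {..<n} \<and> card A \<le> k} \<le> Suc k * n ^ k"
proof -
  have "{A. A \<subseteq> {..<n} \<and> card A \<le> k} = (\<Union>j\<le>k. {A. A \<subseteq> {..<n} \<and> card A = j})" by auto
  then have "card {A. A \<subseteq> {..<n} \<and> card A \<le> k} \<le> (\<Sum>j\<le>k. card {A. A \<subseteq> {..<n} \<and> card A = j})"
    by (simp add: card_UN_le)
  also have "\<dots> \<le> (\<Sum>j\<le>k. n ^ k)"
  proof (rule sum_mono)
    fix j assume "j \<in> {..k}"
    have "n choose j \<le> n ^ j"
      by (cases "j \<le> n") (simp_all add: binomial_le_pow binomial_eq_0)
    also have "\<dots> \<le> n ^ k" using \<open>j \<in> {..k}\<close> assms by (intro power_increasing) auto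
    finally show "card {A. A \<subseteq> {..<n} \<and> card A = j} \<le> n ^ k" by (simp add: n_subsets)
  qed
  finally show ?thesis by simp
qed

lemma not_extension_property_graph_of:
  assumes "\<not> extension_property k n (graph_of n b)"
  obtains A S where "A \<subseteq> {..<n}" "card A \<le> k" "S \<subseteq> A"
    "\<forall>z\<in>{..<n} - A. \<not> (\<forall>y\<in>A. b {z, y} = (y \<in> S))"
proof -
  obtain A S where AS: "A \<subseteq> {..<n}" "card A \<le> k" "S \<subseteq> A"
    and none: "\<And>z. z < n \<Longrightarrow> z \<notin> A \<Longrightarrow> \<not> (\<forall>y\<in>A. {z, y} \<in> graph_of n b \<longleftrightarrow> y \<in> S)"
    using assms unfolding extension_property_def by blast
  have "\<not> (\<forall>y\<in>A. b {z, y} = (y \<in> S))" if z: "z \<in> {..<n} - A" for z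
  proof
    assume "\<forall>y\<in>A. b {z, y} = (y \<in> S)"
    then have "{z, y} \<in> graph_of n b \<longleftrightarrow> y \<in> S" if "y \<in> A" for y
      using that z AS(1) graph_of_iff[of z y n b] by (auto simp: doubleton_in_pairs_iff)
    then show False using none[of z] z by auto
  qed
  with AS that show ?thesis by blast
qed

lemma card_small_subsets_with_subsets_le:
  assumes "0 < n"
  shows "card (SIGMA A:{A. A \<subseteq> {..<n} \<and> card A \<le> k}. Pow A) \<le> Suc k * 2 ^ k * n ^ k"
proof -
  have "card (SIGMA A:{A. A \<subseteq> {..<n} \<and> card A \<le> k}. Pow A) =
      (\<Sum>A | A \<subseteq> {..<n} \<and> card A \<le> k. card (Pow A))"
    by (subst card_SigmaI) (auto intro: finite_subset)
  also have "\<dots> = (\<Sum>A | A \<subseteq> {..<n} \<and> card A \<le> k. 2 ^ card A)"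
    by (intro sum.cong refl) (metis (mono_tags) mem_Collect_eq card_Pow finite_lessThan finite_subset)
  also have "\<dots> \<le> (\<Sum>A | A \<subseteq> {..<n} \<and> card A \<le> k. 2 ^ k)"
    by (intro sum_mono power_increasing) auto
  also have "\<dots> \<le> Suc k * n ^ k * 2 ^ k"
    using card_small_subsets_le[OF assms, of k] by simp
  finally show ?thesis by (simp only: ac_simps)
qed

lemma measure_gnp_not_extension_property_le:
  assumes p: "0 < p" "p < 1" and n: "0 < n"
  shows "measure_pmf.prob (gnp n p) {E. \<not> extension_property k n E}
    \<le> real (Suc k * 2 ^ k * n ^ k) * (1 - min p (1 - p) ^ k) ^ (n - k)"
proof -
  let ?P = "measure_pmf.prob (edge_coins n p)"
  let ?B = "(1 - min p (1 - p) ^ k) ^ (n - k)"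
  let ?Fail = "\<lambda>(A, S). {b. \<forall>z\<in>{..<n} - A. \<not> (\<forall>y\<in>A. b {z, y} = (y \<in> S))}"
  let ?I = "SIGMA A:{A. A \<subseteq> {..<n} \<and> card A \<le> k}. Pow A"
  have finI: "finite ?I"
    by (rule finite_subset[of _ "Pow {..<n} \<times> Pow {..<n}"]) auto
  have "{b. \<not> extension_property k n (graph_of n b)} \<subseteq> (\<Union>AS\<in>?I. ?Fail AS)"
  proof
    fix b assume "b \<in> {b. \<not> extension_property k n (graph_of n b)}"
    then obtain A S where "A \<subseteq> {..<n}" "card A \<le> k" "S \<subseteq> A"
      "\<forall>z\<in>{..<n} - A. \<not> (\<forall>y\<in>A. b {z, y} = (y \<in> S))"
      by (auto elim: not_extension_property_graph_of)
    then show "b \<in> (\<Union>AS\<in>?I. ?Fail AS)" by (intro UN_I[of "(A, S)"]) auto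
  qed
  then have "measure_pmf.prob (gnp n p) {E. \<not> extension_property k n E} \<le> ?P (\<Union>AS\<in>?I. ?Fail AS)"
    unfolding measure_gnp by (intro measure_pmf.finite_measure_mono) auto
  also have "\<dots> \<le> (\<Sum>AS\<in>?I. ?P (?Fail AS))"
    by (intro measure_pmf.finite_measure_subadditive_finite finI) auto
  also have "\<dots> \<le> (\<Sum>AS\<in>?I. ?B)"
  proof (rule sum_mono)
    fix AS assume "AS \<in> ?I"
    then obtain A S where "AS = (A, S)" "A \<subseteq> {..<n}" "card A \<le> k" by auto
    then show "?P (?Fail AS) \<le> ?B" using measure_no_extension_witness[OF p, of A n k S] by simp
  qed
  also have "\<dots> \<le> real (Suc k * 2 ^ k * n ^ k) * ?B"
    using card_small_subsets_with_subsets_le[OF n, of k] p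
    by (simp only: sum_constant, intro mult_right_mono zero_le_power)
      (simp_all only: of_nat_le_iff, simp add: power_le_one)
  finally show ?thesis .
qed

lemma AE_eventually_extension_property:
  assumes "prob_space M" "0 < p" "p < 1"
    and meas: "\<And>n. G n \<in> measurable M (count_space UNIV)"
    and distr: "\<And>n. distr M (count_space UNIV) (G n) = measure_pmf (gnp n p)"
  shows "AE \<omega> in M. eventually (\<lambda>n. extension_property k n (G n \<omega>)) sequentially"
proof (rule AE_eventually_if_summable[OF assms(1) meas distr])
  let ?r = "1 - min p (1 - p) ^ k"
  let ?C = "real (Suc k * 2 ^ k) / ?r ^ k"
  have c: "0 < min p (1 - p)" "min p (1 - p) < 1" using assms(2,3) by auto
  have r: "0 \<le> ?r" "?r < 1" using c by (auto simp: power_le_one)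
  have rk: "0 < ?r ^ k"
  proof (cases "k = 0")
    case False
    then have "min p (1 - p) ^ k \<le> min p (1 - p) ^ 1"
      using c by (intro power_decreasing) auto
    then show ?thesis using c by simp
  qed simp
  have "summable (\<lambda>n. ?C * (real n ^ k * ?r ^ n))"
    by (intro summable_mult summable_power_mult_geometric) (use r in auto)
  then show "summable (\<lambda>n. measure_pmf.prob (gnp n p) {E. \<not> extension_property k n E})"
  proof (rule summable_comparison_test_ev[rotated])
    show "eventually (\<lambda>n. norm (measure_pmf.prob (gnp n p) {E. \<not> extension_property k n E})
        \<le> ?C * (real n ^ k * ?r ^ n)) sequentially"
      using eventually_gt_at_top[of k]
    proof eventually_elim
      case (elim n)
      have "?r ^ n = ?r ^ (n - k) * ?r ^ k" using elim by (simp flip: power_add)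
      then have "real (Suc k * 2 ^ k * n ^ k) * ?r ^ (n - k) = ?C * (real n ^ k * ?r ^ n)"
        using rk by (auto simp del: of_nat_Suc simp add: divide_simps power_0_left)
      then show ?case
        using measure_gnp_not_extension_property_le[OF assms(2,3), of n k] elim by simp
    qed
  qed
qed

definition pattern_event :: "(nat \<times> nat \<Rightarrow> bool) \<Rightarrow> nat \<Rightarrow> (nat \<Rightarrow> nat) \<Rightarrow> (nat set \<Rightarrow> bool) set" where
  "pattern_event c q v = {b. \<forall>(i, j) \<in> index_pairs q. b {v i, v j} = c (i, j)}"

definition pattern_prob :: "real \<Rightarrow> (nat \<times> nat \<Rightarrow> bool) \<Rightarrow> nat \<Rightarrow> real" where
  "pattern_prob p c q = (\<Prod>(i, j) \<in> index_pairs q. if c (i, j) then p else 1 - p)"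

definition edge_sharing :: "nat \<Rightarrow> nat \<Rightarrow> ((nat \<Rightarrow> nat) \<times> (nat \<Rightarrow> nat)) set" where
  "edge_sharing q n = {(v, w) \<in> injective_tuples q n \<times> injective_tuples q n.
     \<exists>(i, j) \<in> index_pairs q. \<exists>(i', j') \<in> index_pairs q. {v i, v j} = {w i', w j'}}"

lemma injective_tuple_pair_in_pairs:
  assumes "v \<in> injective_tuples q n" "i < q" "j < q" "i \<noteq> j"
  shows "{v i, v j} \<in> pairs n"
  using assms by (auto simp: injective_tuples_def doubleton_in_pairs_iff PiE_iff dest: inj_onD)

lemma pattern_density_graph_of:
  assumes "c \<in> patterns q"
  shows "pattern_density c q n (graph_of n b) =
    (\<Sum>v\<in>injective_tuples q n. indicator (pattern_event c q v) b) / real n ^ q"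
proof -
  have "edge_pattern q (graph_of n b) v = c \<longleftrightarrow> b \<in> pattern_event c q v"
    if "v \<in> injective_tuples q n" for v
    using injective_tuple_pair_in_pairs[OF that] edge_pattern_eq_iff[OF assms]
    by (auto simp: pattern_event_def index_pairs_def graph_of_def)
  then have "{v \<in> injective_tuples q n. edge_pattern q (graph_of n b) v = c} =
      {v \<in> injective_tuples q n. b \<in> pattern_event c q v}" by blast
  then show ?thesis
    by (simp add: pattern_density_def indicator_def of_bool_def[symmetric] finite_injective_tuples
        Int_def Collect_conj_eq[symmetric])
qed

lemma measure_pattern_event:
  assumes "0 \<le> p" "p \<le> 1" and v: "v \<in> injective_tuples q n"
  shows "measure_pmf.prob (edge_coins n p) (pattern_event c q v) = pattern_prob p c q"
proof -
  have "inj_on (\<lambda>(i, j). {v i, v j}) (index_pairs q)"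
  proof (rule inj_onI, clarify)
    fix i j i' j'
    assume ij: "(i, j) \<in> index_pairs q" "(i', j') \<in> index_pairs q" and eq: "{v i, v j} = {v i', v j'}"
    have inj: "inj_on v {..<q}" using v by (simp add: injective_tuples_def)
    have "(v i = v i' \<and> v j = v j') \<or> (v i = v j' \<and> v j = v i')"
      using eq by (simp add: doubleton_eq_iff)
    then have "(i = i' \<and> j = j') \<or> (i = j' \<and> j = i')"
      using ij inj_onD[OF inj] by (auto simp: index_pairs_def)
    then show "i = i' \<and> j = j'" using ij by (auto simp: index_pairs_def)
  qed
  moreover have "(\<lambda>(i, j). {v i, v j}) ` index_pairs q \<subseteq> pairs n"
    using injective_tuple_pair_in_pairs[OF v] by (auto simp: index_pairs_def)
  ultimately have "measure_pmf.prob (edge_coins n p) {b. \<forall>ij\<in>index_pairs q. b ((\<lambda>(i, j). {v i, v j}) ij) = c ij}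
      = pattern_prob p c q"
    using assms(1,2) unfolding pattern_prob_def
    by (subst measure_edge_coins_values) (auto simp: finite_index_pairs case_prod_beta)
  then show ?thesis by (simp add: pattern_event_def case_prod_beta)
qed

lemma measure_pattern_event_Int:
  assumes v: "v \<in> injective_tuples q n" and w: "w \<in> injective_tuples q n"
    and disj: "(v, w) \<notin> edge_sharing q n"
  shows "measure_pmf.prob (edge_coins n p) (pattern_event c q v \<inter> pattern_event c q w) =
    measure_pmf.prob (edge_coins n p) (pattern_event c q v) *
    measure_pmf.prob (edge_coins n p) (pattern_event c q w)"
proof -
  let ?K = "\<lambda>v. (\<lambda>(i, j). {v i, v j}) ` index_pairs q"
  have K: "?K v \<subseteq> pairs n" "?K w \<subseteq> pairs n"
    using injective_tuple_pair_in_pairs[OF v] injective_tuple_pair_in_pairs[OF w]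
    by (auto simp: index_pairs_def)
  have "?K v \<inter> ?K w = {}" using disj v w by (auto simp: edge_sharing_def)
  have "measure_pmf.prob (edge_coins n p) {b. b \<in> pattern_event c q v \<and> b \<in> pattern_event c q w} =
    measure_pmf.prob (edge_coins n p) {b. b \<in> pattern_event c q v} *
    measure_pmf.prob (edge_coins n p) {b. b \<in> pattern_event c q w}"
    unfolding edge_coins_def
    by (rule measure_Pi_pmf_Int_disjoint[OF finite_pairs K \<open>?K v \<inter> ?K w = {}\<close>])
      (auto simp: pattern_event_def)
  then show ?thesis by (simp add: Int_def)
qed

lemma edge_sharing_witness:
  assumes "(v, w) \<in> edge_sharing q n"
  obtains i j i' j' where "i < q" "j < q" "i' < q" "j' < q" "i \<noteq> j" "i' \<noteq> j'"
    "v i = w i'" "v j = w j'" "v \<in> tuples q n" "w \<in> tuples q n"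
proof -
  obtain i j i' j' where ij: "(i, j) \<in> index_pairs q" "(i', j') \<in> index_pairs q"
    and eq: "{v i, v j} = {w i', w j'}" and vw: "v \<in> tuples q n" "w \<in> tuples q n"
    using assms by (auto simp: edge_sharing_def injective_tuples_def)
  have idx: "i < q" "j < q" "i' < q" "j' < q" "i \<noteq> j" "i' \<noteq> j'"
    using ij by (auto simp: index_pairs_def)
  from eq consider "v i = w i'" "v j = w j'" | "v i = w j'" "v j = w i'"
    by (auto simp: doubleton_eq_iff)
  then show ?thesis
  proof cases
    case 1 with idx vw that show ?thesis by blast
  next
    case 2 with idx vw that[of i j j' i'] show ?thesis by blast
  qed
qed

lemma card_edge_sharing: "card (edge_sharing q n) * n ^ 2 \<le> q ^ 4 * n ^ (2 * q)"
proof (cases "n = 0")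
  case False
  let ?Q = "{(i, j, i', j'). i < q \<and> j < q \<and> i' < q \<and> j' < q \<and> i \<noteq> j \<and> i' \<noteq> j'}"
  let ?F = "\<lambda>i j a b. {v \<in> tuples q n. v i = a \<and> v j = b}"
  let ?S = "\<lambda>((i, j, i', j'), a, b). ?F i j a b \<times> ?F i' j' a b"
  let ?I = "?Q \<times> ({..<n} \<times> {..<n})"
  have finQ: "finite ?Q"
    by (rule finite_subset[of _ "{..<q} \<times> {..<q} \<times> {..<q} \<times> {..<q}"]) auto
  have cardQ: "card ?Q \<le> q ^ 4"
    using card_mono[of "{..<q} \<times> {..<q} \<times> {..<q} \<times> {..<q}" ?Q]
    by (auto simp: card_cartesian_product power4_eq_xxxx mult.assoc)
  have cover: "edge_sharing q n \<subseteq> (\<Union>t\<in>?I. ?S t)"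
  proof clarify
    fix v w assume "(v, w) \<in> edge_sharing q n"
    then obtain i j i' j' where "i < q" "j < q" "i' < q" "j' < q" "i \<noteq> j" "i' \<noteq> j'"
      "v i = w i'" "v j = w j'" "v \<in> tuples q n" "w \<in> tuples q n"
      by (rule edge_sharing_witness)
    then have "((i, j, i', j'), v i, v j) \<in> ?I" "(v, w) \<in> ?S ((i, j, i', j'), v i, v j)"
      by auto
    then show "(v, w) \<in> (\<Union>t\<in>?I. ?S t)" by blast
  qed
  have each: "card (?S t) * n ^ 4 \<le> n ^ q * n ^ q" if "t \<in> ?I" for t
  proof -
    obtain i j i' j' a b where t: "t = ((i, j, i', j'), a, b)" "i < q" "j < q" "i' < q" "j' < q"
      "i \<noteq> j" "i' \<noteq> j'" using \<open>t \<in> ?I\<close> by auto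
    have "card (?S t) * n ^ 4 = (card (?F i j a b) * n ^ 2) * (card (?F i' j' a b) * n ^ 2)"
      by (simp add: t card_cartesian_product power4_eq_xxxx power2_eq_square ac_simps)
    also have "\<dots> \<le> n ^ q * n ^ q"
      using t by (intro mult_mono card_tuples_two_values) auto
    finally show ?thesis .
  qed
  have "card (edge_sharing q n) * n ^ 4 \<le> (\<Sum>t\<in>?I. card (?S t)) * n ^ 4"
  proof (intro mult_right_mono order.trans[OF card_mono card_UN_le])
    show "finite (\<Union>t\<in>?I. ?S t)" using finQ by (auto simp: finite_cartesian_product)
  qed (use cover finQ in auto)
  also have "\<dots> \<le> (\<Sum>t\<in>?I. n ^ q * n ^ q)"
    unfolding sum_distrib_right by (intro sum_mono each)
  also have "\<dots> \<le> q ^ 4 * n ^ 2 * n ^ (2 * q)"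
    using cardQ by (simp add: card_cartesian_product power2_eq_square mult_2 power_add)
  finally have "card (edge_sharing q n) * n ^ 2 * n ^ 2 \<le> q ^ 4 * n ^ (2 * q) * n ^ 2"
    by (simp add: power4_eq_xxxx power2_eq_square ac_simps)
  then show ?thesis using False by simp
qed (simp add: edge_sharing_def injective_tuples_def)

lemma measure_pattern_density_deviation:
  assumes p: "0 < p" "p < 1" and c: "c \<in> patterns q" and \<epsilon>: "0 < \<epsilon>" and n: "0 < n"
  shows "measure_pmf.prob (gnp n p) {E. \<epsilon> \<le> \<bar>pattern_density c q n E -
      real (card (injective_tuples q n)) * pattern_prob p c q / real n ^ q\<bar>}
    \<le> real q ^ 4 / (\<epsilon>\<^sup>2 * real n ^ 2)"
proof -
  let ?M = "edge_coins n p"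
  let ?X = "\<lambda>b. \<Sum>v\<in>injective_tuples q n. indicator (pattern_event c q v) b :: real"
  let ?\<mu> = "real (card (injective_tuples q n)) * pattern_prob p c q"
  let ?a = "\<epsilon> * real n ^ q"
  have npos: "0 < real n ^ q" using n by simp
  have int: "integrable (measure_pmf ?M) f" for f :: "_ \<Rightarrow> real"
    by (rule integrable_measure_pmf_finite[OF finite_set_edge_coins])
  have EX: "measure_pmf.expectation ?M ?X = ?\<mu>"
    using p by (subst Bochner_Integration.integral_sum)
      (simp_all add: int measure_pattern_event)
  have "measure_pmf.prob (gnp n p) {E. \<epsilon> \<le> \<bar>pattern_density c q n E - ?\<mu> / real n ^ q\<bar>} =
      measure_pmf.prob ?M {b \<in> space (measure_pmf ?M). ?a \<le> \<bar>?X b - measure_pmf.expectation ?M ?X\<bar>}"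
  proof -
    have "\<epsilon> \<le> \<bar>?X b / real n ^ q - ?\<mu> / real n ^ q\<bar> \<longleftrightarrow> ?a \<le> \<bar>?X b - ?\<mu>\<bar>" for b
      using npos by (simp add: diff_divide_distrib[symmetric] abs_divide pos_le_divide_eq)
    then show ?thesis
      unfolding measure_gnp pattern_density_graph_of[OF c] EX by simp
  qed
  also have "\<dots> \<le> measure_pmf.variance ?M ?X / ?a\<^sup>2"
    using \<epsilon> npos by (intro measure_pmf.Chebyshev_inequality) (simp_all add: int)
  also have "\<dots> \<le> real (card (edge_sharing q n)) / ?a\<^sup>2"
  proof (intro divide_right_mono variance_indicator_sum_le[OF finite_set_edge_coins finite_injective_tuples])
    show "edge_sharing q n \<subseteq> injective_tuples q n \<times> injective_tuples q n"
      by (auto simp: edge_sharing_def)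
  qed (auto intro: measure_pattern_event_Int)
  also have "\<dots> \<le> real q ^ 4 / (\<epsilon>\<^sup>2 * real n ^ 2)"
  proof -
    have "real (card (edge_sharing q n)) * real n ^ 2 \<le> real q ^ 4 * real n ^ (2 * q)"
      using card_edge_sharing[of q n] by (metis of_nat_le_iff of_nat_mult of_nat_power)
    moreover have "?a\<^sup>2 = \<epsilon>\<^sup>2 * real n ^ (2 * q)" by (simp add: power_mult_distrib power_mult mult.commute)
    ultimately show ?thesis
      using \<epsilon> n by (simp add: field_simps)
  qed
  finally show ?thesis .
qed

lemma AE_pattern_density_tendsto:
  assumes "prob_space M" "0 < p" "p < 1"
    and meas: "\<And>n. G n \<in> measurable M (count_space UNIV)"
    and distr: "\<And>n. distr M (count_space UNIV) (G n) = measure_pmf (gnp n p)"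
    and c: "c \<in> patterns q"
  shows "AE \<omega> in M. (\<lambda>n. pattern_density c q n (G n \<omega>)) \<longlonglongrightarrow> pattern_prob p c q"
proof -
  let ?\<mu> = "\<lambda>n. real (card (injective_tuples q n)) * pattern_prob p c q / real n ^ q"
  have "AE \<omega> in M. (\<lambda>n. pattern_density c q n (G n \<omega>) - ?\<mu> n) \<longlonglongrightarrow> 0"
  proof (rule AE_tendsto_0_if_AE_eventually_small)
    fix \<epsilon> :: real assume "0 < \<epsilon>"
    let ?bad = "\<lambda>n. {E. \<not> \<bar>pattern_density c q n E - ?\<mu> n\<bar> < \<epsilon>}"
    show "AE \<omega> in M. eventually (\<lambda>n. \<bar>pattern_density c q n (G n \<omega>) - ?\<mu> n\<bar> < \<epsilon>) sequentially"
    proof (rule AE_eventually_if_summable[OF assms(1) meas distr])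
      have "summable (\<lambda>n. real q ^ 4 / \<epsilon>\<^sup>2 * inverse (real n ^ 2))"
        by (intro summable_mult inverse_power_summable) simp
      moreover have "eventually (\<lambda>n. norm (measure_pmf.prob (gnp n p) (?bad n))
          \<le> real q ^ 4 / \<epsilon>\<^sup>2 * inverse (real n ^ 2)) sequentially"
        using eventually_gt_at_top[of 0]
      proof eventually_elim
        case (elim n)
        then show ?case
          using measure_pattern_density_deviation[OF assms(2,3) c \<open>0 < \<epsilon>\<close> elim]
          by (simp add: not_less field_simps)
      qed
      ultimately show "summable (\<lambda>n. measure_pmf.prob (gnp n p) (?bad n))"
        by (rule summable_comparison_test_ev[rotated])
    qed
  qed
  moreover have \<mu>: "?\<mu> \<longlonglongrightarrow> 1 * pattern_prob p c q"
    using tendsto_mult_right[OF injective_density_tendsto_1] by (simp add: field_simps)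
  ultimately show ?thesis
  proof (elim AE_mp, intro AE_I2 impI)
    fix \<omega> assume "(\<lambda>n. pattern_density c q n (G n \<omega>) - ?\<mu> n) \<longlonglongrightarrow> 0"
    from tendsto_add[OF this \<mu>] show "(\<lambda>n. pattern_density c q n (G n \<omega>)) \<longlonglongrightarrow> pattern_prob p c q"
      by simp
  qed
qed

lemma AE_loopless:
  assumes meas: "\<And>n. G n \<in> measurable M (count_space UNIV)"
    and distr: "\<And>n. distr M (count_space UNIV) (G n) = measure_pmf (gnp n p)"
  shows "AE \<omega> in M. \<forall>n. loopless (G n \<omega>)"
proof -
  have "AE E in measure_pmf (gnp n p). loopless E" for n
    by (rule AE_pmfI) (auto simp: gnp_def loopless_def pairs_def doubleton_eq_iff)
  then have "AE \<omega> in M. loopless (G n \<omega>)" for n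
    unfolding distr[symmetric] by (rule AE_distrD[OF meas])
  then show ?thesis by (simp add: AE_all_countable)
qed


theorem theorem5p14:
  fixes M :: "'w measure" and G :: "nat \<Rightarrow> 'w \<Rightarrow> nat set set" and p :: real
  assumes "prob_space M"
    and "0 < p" and "p < 1"
    and "prob_space.indep_vars M (\<lambda>_. count_space UNIV) G UNIV"
    and "\<And>n. distr M (count_space UNIV) (G n) = measure_pmf (gnp n p)"
  shows "AE \<omega> in M. FO_convergent (\<lambda>n. G n \<omega>)"
proof -
  note distr = assms(5)
  have meas: "G n \<in> measurable M (count_space UNIV)" for n
    using assms(4) by (simp add: prob_space.indep_vars_def2[OF assms(1)])
  have "AE \<omega> in M. \<forall>n. loopless (G n \<omega>)"
    by (rule AE_loopless[OF meas distr])
  moreover have "AE \<omega> in M. \<forall>k. eventually (\<lambda>n. extension_property k n (G n \<omega>)) sequentially"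
    unfolding AE_all_countable
    by (intro allI AE_eventually_extension_property[OF assms(1-3) meas distr])
  moreover have "AE \<omega> in M. convergent (\<lambda>n. pattern_density c q n (G n \<omega>))"
    if "c \<in> patterns q" for q c
    using AE_pattern_density_tendsto[OF assms(1-3) meas distr that]
    by eventually_elim (rule convergentI)
  then have "AE \<omega> in M. \<forall>q. \<forall>c\<in>patterns q. convergent (\<lambda>n. pattern_density c q n (G n \<omega>))"
    unfolding AE_all_countable by (intro allI AE_finite_allI[OF finite_patterns])
  ultimately show ?thesis
  proof eventually_elim
    case (elim \<omega>)
    then show ?case by (intro FO_convergent_if_pattern_densities_converge) auto
  qed
qed

end
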